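(* There is no deterministic parallel-work-oblivious scheduler for the serial-parallel scheduling problem on $p$ processors that achieves awake-time competitive ratio better than $2-\Omega(1/p)$, even in the single-arrival-time setting in which all tasks arrive at time $0$: there is an absolute constant $C$ such that for every such scheduler there is a task arrival process with all arrival times equal to $0$ on which its awake time is at least $(2-C/p)$ times the optimal offline awake time.
   Context: Serial-parallel scheduling problem: $p$ identical processors. A task arrival process is a finite set of tasks $\tau_i=(\sigma_i,\pi_i,t_i)$ with arrival time $t_i\ge0$, serial work $\sigma_i$ and parallel work $\pi_i$, $1\le\pi_i/\sigma_i\le p$. A task is performed either by its serial job (work $\sigma_i$, at most one processor at any instant) or by its parallel job (work $\pi_i$, any number of processors, rate equal to number of processors); time is continuous, allocations may be fractional, preemption is allowed, and the implementation choice is irrevocable once the task is started. A task is alive from arrival until completion; awake time is the measure of the set of times at which some task is alive. The optimal offline schedule knows everything in advance. A parallel-work-oblivious scheduler learns, for each task, its arrival time and serial work $\sigma_i$ but never its parallel work $\pi_i$ (it only observes when a running parallel job completes). *)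

theory Defs
  imports "HOL-Analysis.Analysis"
begin

text \<open>A task is a triple (sigma, pi, t): serial work, parallel work, arrival time.
  A task arrival process is a finite list of tasks; the task identity is its index.\<close>

type_synonym task = "real \<times> real \<times> real"

definition ser_work :: "task \<Rightarrow> real" where "ser_work tau = fst tau"
definition par_work :: "task \<Rightarrow> real" where "par_work tau = fst (snd tau)"
definition arrival :: "task \<Rightarrow> real" where "arrival tau = snd (snd tau)"

definition valid_instance :: "nat \<Rightarrow> task list \<Rightarrow> bool" where
  "valid_instance p I \<longleftrightarrow>
     (\<forall>tau\<in>set I. 0 < ser_work tau \<and> 1 \<le> par_work tau / ser_work tau
        \<and> par_work tau / ser_work tau \<le> real p \<and> 0 \<le> arrival tau)"

text \<open>A schedule: for each task the implementation choice (True = parallel job,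
  False = serial job) and the (fractional) number of processors allocated to the task
  at each instant of continuous time.\<close>

record schedule =
  choice :: "nat \<Rightarrow> bool"
  alloc :: "nat \<Rightarrow> real \<Rightarrow> real"

definition work_of :: "task list \<Rightarrow> schedule \<Rightarrow> nat \<Rightarrow> real" where
  "work_of I S i = (if choice S i then par_work (I ! i) else ser_work (I ! i))"

definition done_by :: "schedule \<Rightarrow> nat \<Rightarrow> real \<Rightarrow> real" where
  "done_by S i t = integral {0..t} (alloc S i)"

definition completion :: "task list \<Rightarrow> schedule \<Rightarrow> nat \<Rightarrow> real" where
  "completion I S i = Inf {t. arrival (I ! i) \<le> t \<and> work_of I S i \<le> done_by S i t}"

definition feasible :: "nat \<Rightarrow> task list \<Rightarrow> schedule \<Rightarrow> bool" where
  "feasible p I S \<longleftrightarrow>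
     (\<forall>i<length I. \<forall>t. 0 \<le> alloc S i t) \<and>
     (\<forall>i<length I. \<forall>t. t < arrival (I ! i) \<longrightarrow> alloc S i t = 0) \<and>
     (\<forall>i<length I. \<not> choice S i \<longrightarrow> (\<forall>t. alloc S i t \<le> 1)) \<and>
     (\<forall>t. (\<Sum>i<length I. alloc S i t) \<le> real p) \<and>
     (\<forall>i<length I. \<forall>t. alloc S i integrable_on {0..t}) \<and>
     (\<forall>i<length I. \<exists>t. work_of I S i \<le> done_by S i t)"

definition awake_time :: "task list \<Rightarrow> schedule \<Rightarrow> real" where
  "awake_time I S = measure lborel (\<Union>i<length I. {arrival (I ! i) ..< completion I S i})"

definition opt_awake :: "nat \<Rightarrow> task list \<Rightarrow> real" where
  "opt_awake p I = Inf {awake_time I S | S. feasible p I S}"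

definition arrived :: "task list \<Rightarrow> real \<Rightarrow> nat \<Rightarrow> bool" where
  "arrived I t i \<longleftrightarrow> i < length I \<and> arrival (I ! i) \<le> t"

definition par_done :: "task list \<Rightarrow> schedule \<Rightarrow> nat \<Rightarrow> real \<Rightarrow> bool" where
  "par_done I S i u \<longleftrightarrow> choice S i \<and> completion I S i \<le> u"

text \<open>Everything the scheduler can have observed up to time t agrees on I and I':
  the tasks that have arrived, their arrival times and serial works, and the times of
  completion of the parallel jobs it runs.\<close>
definition same_history :: "(task list \<Rightarrow> schedule) \<Rightarrow> task list \<Rightarrow> task list \<Rightarrow> real \<Rightarrow> bool" where
  "same_history A I I' t \<longleftrightarrow>
     (\<forall>i. arrived I t i \<longleftrightarrow> arrived I' t i) \<and>
     (\<forall>i. arrived I t i \<longrightarrow>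
        ser_work (I ! i) = ser_work (I' ! i) \<and> arrival (I ! i) = arrival (I' ! i) \<and>
        (\<forall>u\<le>t. par_done I (A I) i u \<longleftrightarrow> par_done I' (A I') i u))"

text \<open>A deterministic scheduler maps each task arrival process to a feasible schedule;
  it is parallel-work-oblivious (and online) if its actions up to time t are determined
  by its history up to time t; the implementation choice of a task that has already
  received processing is fixed (irrevocable).\<close>
definition oblivious_scheduler :: "nat \<Rightarrow> (task list \<Rightarrow> schedule) \<Rightarrow> bool" where
  "oblivious_scheduler p A \<longleftrightarrow>
     (\<forall>I. valid_instance p I \<longrightarrow> feasible p I (A I)) \<and>
     (\<forall>I I' t. valid_instance p I \<longrightarrow> valid_instance p I' \<longrightarrow> same_history A I I' t \<longrightarrow>
        (\<forall>i. arrived I t i \<longrightarrow>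
           (\<forall>u\<le>t. alloc (A I) i u = alloc (A I') i u) \<and>
           (0 < done_by (A I) i t \<longrightarrow> choice (A I) i = choice (A I') i)))"

end

(* Two tasks of serial work 1 released at time 0 suffice. Run the scheduler on the instance B
   whose parallel works are both p. If it runs both tasks in parallel, B takes time 2, while
   running both serially takes time 1. Otherwise some task b runs serially; let s be the time
   at which it starts. If s >= 1 - 4/p, B takes time s + 1 against an optimum of 1. If not,
   let W give the other task a parallel work just above what it has received by time s, and b
   parallel work 1. No parallel job of B completes before time 1, and so none of W completes
   by time s: up to time s the scheduler observes on W exactly what it observes on B, and b
   again starts serially at time s. Yet both tasks of W run in parallel finish by s + 2/p. *)

theory Submission
  imports Defs
begin

lemma valid_instance_works:
  assumes "valid_instance p I" "tau \<in> set I"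
  shows "0 < ser_work tau" "ser_work tau \<le> par_work tau"
  using assms by (auto simp: valid_instance_def le_divide_eq_1_pos)

lemma work_of_pos:
  assumes "valid_instance p I" "i < length I"
  shows "0 < work_of I S i"
  using valid_instance_works[OF assms(1) nth_mem[OF assms(2)]] by (auto simp: work_of_def)

lemma done_by_nonpos: "t \<le> 0 \<Longrightarrow> done_by S i t = 0"
  by (cases "t = 0") (simp_all add: done_by_def)

lemma done_by_max0: "done_by S i (max 0 t) = done_by S i t"
  by (simp add: max_def done_by_nonpos)

lemma done_by_nonneg:
  assumes "feasible p I S" "i < length I"
  shows "0 \<le> done_by S i t"
  unfolding done_by_def
  by (rule integral_nonneg) (use assms in \<open>auto simp: feasible_def\<close>)

lemma alloc_le_processors:
  assumes "feasible p I S" "i < length I"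
  shows "alloc S i t \<le> real p"
proof -
  have "alloc S i t \<le> (\<Sum>j<length I. alloc S j t)"
    by (rule member_le_sum) (use assms in \<open>auto simp: feasible_def\<close>)
  also have "\<dots> \<le> real p" using assms by (auto simp: feasible_def)
  finally show ?thesis .
qed

lemma done_by_increment:
  assumes F: "feasible p I S" and i: "i < length I" and t: "t1 \<le> t2"
    and M: "\<And>u. alloc S i u \<le> M"
  shows "done_by S i t1 \<le> done_by S i t2"
    and "done_by S i t2 \<le> done_by S i t1 + M * (t2 - t1)"
proof -
  define a b where "a = max 0 t1" and "b = max 0 t2"
  have ab: "0 \<le> a" "a \<le> b" "b - a \<le> t2 - t1" using t by (auto simp: a_def b_def)
  have nonneg: "\<And>u. 0 \<le> alloc S i u" and int0: "alloc S i integrable_on {0..b}"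
    using F i by (simp_all add: feasible_def)
  have int: "alloc S i integrable_on {a..b}"
    by (rule integrable_subinterval_real[OF int0]) (use ab in auto)
  have split: "done_by S i a + integral {a..b} (alloc S i) = done_by S i b"
    unfolding done_by_def
    by (rule Henstock_Kurzweil_Integration.integral_combine) (use ab int0 in auto)
  have "0 \<le> integral {a..b} (alloc S i)"
    by (rule integral_nonneg[OF int]) (use nonneg in auto)
  then show "done_by S i t1 \<le> done_by S i t2"
    using split by (simp add: a_def b_def done_by_max0)
  have "0 \<le> M" using nonneg[of 0] M[of 0] by linarith
  have "integral {a..b} (alloc S i) \<le> integral {a..b} (\<lambda>_. M)"
    by (rule integral_le[OF int]) (use M in auto)
  also have "\<dots> \<le> M * (t2 - t1)"
    using ab \<open>0 \<le> M\<close> by (simp add: mult.commute mult_left_mono)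
  finally show "done_by S i t2 \<le> done_by S i t1 + M * (t2 - t1)"
    using split by (simp add: a_def b_def done_by_max0)
qed

lemma done_by_mono:
  assumes "feasible p I S" "i < length I" "t1 \<le> t2"
  shows "done_by S i t1 \<le> done_by S i t2"
  using done_by_increment(1)[OF assms alloc_le_processors[OF assms(1,2)]] .

lemma done_by_le_processors_times:
  assumes "feasible p I S" "i < length I" "0 \<le> t"
  shows "done_by S i t \<le> real p * t"
  using done_by_increment(2)[OF assms(1,2,3) alloc_le_processors[OF assms(1,2)]]
  by (simp add: done_by_nonpos)

lemma done_by_lipschitz:
  assumes "feasible p I S" "i < length I"
  shows "lipschitz_on (real p) UNIV (done_by S i)"
proof (rule lipschitz_on_leI)
  fix t1 t2 :: real assume "t1 \<le> t2"
  then show "dist (done_by S i t1) (done_by S i t2) \<le> real p * dist t1 t2"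
    using done_by_increment[OF assms \<open>t1 \<le> t2\<close> alloc_le_processors[OF assms]]
    by (simp add: dist_real_def)
qed simp

lemma continuous_on_done_by:
  "feasible p I S \<Longrightarrow> i < length I \<Longrightarrow> continuous_on A (done_by S i)"
  using lipschitz_on_continuous_on[OF done_by_lipschitz] continuous_on_subset by blast

lemma done_by_congI:
  assumes "\<And>u. 0 \<le> u \<Longrightarrow> u \<le> t \<Longrightarrow> alloc S i u = alloc S' i u"
  shows "done_by S i t = done_by S' i t"
  unfolding done_by_def by (rule integral_cong) (use assms in auto)

lemma sum_done_by_le:
  assumes F: "feasible p I S" and "0 \<le> t"
  shows "(\<Sum>i<length I. done_by S i t) \<le> real p * t"
proof -
  have int: "\<And>i. i \<in> {..<length I} \<Longrightarrow> alloc S i integrable_on {0..t}"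
    using F by (simp add: feasible_def)
  have "(\<Sum>i<length I. done_by S i t) = integral {0..t} (\<lambda>u. \<Sum>i<length I. alloc S i u)"
    unfolding done_by_def
    by (rule Henstock_Kurzweil_Integration.integral_sum[symmetric]) (simp_all add: int)
  also have "\<dots> \<le> integral {0..t} (\<lambda>_. real p)"
    using F
    by (intro integral_le integrable_sum) (simp_all add: int feasible_def integrable_const_ivl)
  also have "\<dots> = real p * t" using \<open>0 \<le> t\<close> by simp
  finally show ?thesis .
qed

lemma processing_start:
  assumes F: "feasible p I S" and i: "i < length I" and "0 < done_by S i r"
  obtains s where "0 \<le> s" "done_by S i s = 0" "\<And>t. s < t \<Longrightarrow> 0 < done_by S i t"
proof -
  define Z where "Z = {t. 0 \<le> t \<and> done_by S i t = 0}"
  have "0 \<in> Z" by (simp add: Z_def done_by_nonpos)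
  moreover have "bdd_above Z"
  proof (rule bdd_aboveI)
    fix z assume "z \<in> Z"
    then show "z \<le> r" using done_by_mono[OF F i, of r z] \<open>0 < done_by S i r\<close>
      by (force simp: Z_def)
  qed
  moreover have "closed Z"
    unfolding Z_def Collect_conj_eq
    by (intro closed_Int closed_Collect_le closed_Collect_eq continuous_on_done_by[OF F i]
        continuous_intros)
  ultimately have "Sup Z \<in> Z" using closed_contains_Sup by blast
  moreover have "0 < done_by S i t" if "Sup Z < t" for t
  proof -
    have "t \<notin> Z" using cSup_upper[OF _ \<open>bdd_above Z\<close>, of t] that by force
    with that \<open>Sup Z \<in> Z\<close> show ?thesis
      using done_by_nonneg[OF F i, of t] by (simp add: Z_def less_le)
  qed
  ultimately show ?thesis using that[of "Sup Z"] unfolding Z_def by blast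
qed

lemma completion_attained:
  assumes F: "feasible p I S" and i: "i < length I"
  shows "arrival (I ! i) \<le> completion I S i"
    and "work_of I S i \<le> done_by S i (completion I S i)"
proof -
  define X where "X = {t. arrival (I ! i) \<le> t \<and> work_of I S i \<le> done_by S i t}"
  obtain t where t: "work_of I S i \<le> done_by S i t" using F i by (auto simp: feasible_def)
  have "max (arrival (I ! i)) t \<in> X"
    using t done_by_mono[OF F i, of t "max (arrival (I ! i)) t"] by (simp add: X_def)
  then have "X \<noteq> {}" by blast
  moreover have "bdd_below X" by (rule bdd_belowI[of _ "arrival (I ! i)"]) (simp add: X_def)
  moreover have "closed X"
    unfolding X_def Collect_conj_eq
    by (intro closed_Int closed_Collect_le continuous_on_done_by[OF F i] continuous_intros)
  ultimately have "Inf X \<in> X" by (rule closed_contains_Inf)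
  then show "arrival (I ! i) \<le> completion I S i"
    and "work_of I S i \<le> done_by S i (completion I S i)"
    by (simp_all add: X_def completion_def)
qed

lemma completion_le:
  assumes "arrival (I ! i) \<le> t" "work_of I S i \<le> done_by S i t"
  shows "completion I S i \<le> t"
  unfolding completion_def
  by (rule cInf_lower) (use assms in \<open>auto intro: bdd_belowI[of _ "arrival (I ! i)"]\<close>)

lemma work_le_processors_times_completion:
  assumes F: "feasible p I S" and i: "i < length I" and "0 \<le> arrival (I ! i)"
  shows "work_of I S i \<le> real p * completion I S i"
proof -
  have "0 \<le> completion I S i" using completion_attained(1)[OF F i] assms(3) by linarith
  then show ?thesis
    using completion_attained(2)[OF F i] done_by_le_processors_times[OF F i] by fastforce
qed

lemma serial_completion_ge:
  assumes F: "feasible p I S" and i: "i < length I" and serial: "\<not> choice S i"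
    and "0 < ser_work (I ! i)" and idle: "done_by S i s = 0"
  shows "s + ser_work (I ! i) \<le> completion I S i"
proof -
  let ?c = "completion I S i"
  have work: "ser_work (I ! i) \<le> done_by S i ?c"
    using completion_attained(2)[OF F i] serial by (simp add: work_of_def)
  have "s \<le> ?c"
  proof (rule ccontr)
    assume "\<not> s \<le> ?c"
    then have "done_by S i ?c \<le> done_by S i s" by (intro done_by_mono[OF F i]) simp
    with work idle \<open>0 < ser_work (I ! i)\<close> show False by simp
  qed
  have "\<And>u. alloc S i u \<le> 1" using F i serial by (simp add: feasible_def)
  from done_by_increment(2)[OF F i \<open>s \<le> ?c\<close> this] work idle show ?thesis by simp
qed

lemma awake_time_zero_arrivals:
  assumes F: "feasible p I S" and "I \<noteq> []" and zero: "\<forall>tau\<in>set I. arrival tau = 0"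
  shows "awake_time I S = Max (completion I S ` {..<length I})"
proof -
  let ?m = "Max (completion I S ` {..<length I})"
  have fin: "finite (completion I S ` {..<length I})" "completion I S ` {..<length I} \<noteq> {}"
    using \<open>I \<noteq> []\<close> by auto
  have arr: "\<And>i. i < length I \<Longrightarrow> arrival (I ! i) = 0" using zero by simp
  have "0 \<le> completion I S 0"
    using completion_attained(1)[OF F, of 0] arr[of 0] \<open>I \<noteq> []\<close> by simp
  moreover have "completion I S 0 \<le> ?m" using fin \<open>I \<noteq> []\<close> by (intro Max_ge) auto
  ultimately have "0 \<le> ?m" by linarith
  have "(\<Union>i<length I. {arrival (I ! i)..<completion I S i}) = {0..<?m}"
    using arr by (auto simp: Max_gr_iff[OF fin])
  then show ?thesis using \<open>0 \<le> ?m\<close> by (simp add: awake_time_def)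
qed

lemma completion_le_awake_time:
  assumes "feasible p I S" "\<forall>tau\<in>set I. arrival tau = 0" "i < length I"
  shows "completion I S i \<le> awake_time I S"
proof -
  have "I \<noteq> []" using assms(3) by auto
  then show ?thesis
    using awake_time_zero_arrivals[OF assms(1) _ assms(2)] assms(3) by (auto intro!: Max_ge)
qed

lemma opt_awake_le_awake_time:
  "feasible p I S \<Longrightarrow> opt_awake p I \<le> awake_time I S"
  unfolding opt_awake_def
  by (rule cInf_lower) (auto intro: bdd_belowI[of _ 0] simp: awake_time_def)

lemma opt_awake_nonneg:
  "feasible p I S \<Longrightarrow> 0 \<le> opt_awake p I"
  unfolding opt_awake_def by (rule cInf_greatest) (auto simp: awake_time_def)

lemma opt_awake_coeff_mono:
  assumes "feasible p I S" "c \<le> d" "d * opt_awake p I \<le> T"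
  shows "c * opt_awake p I \<le> T"
  using mult_right_mono[OF assms(2) opt_awake_nonneg[OF assms(1)]] assms(3) by linarith

definition uniform_schedule :: "(nat \<Rightarrow> bool) \<Rightarrow> (nat \<Rightarrow> real) \<Rightarrow> real \<Rightarrow> schedule" where
  "uniform_schedule ch k T = \<lparr>choice = ch, alloc = (\<lambda>i u. if u \<in> {0..T} then k i else 0)\<rparr>"

lemma done_by_uniform_schedule:
  assumes "0 \<le> t" "0 \<le> T"
  shows "done_by (uniform_schedule ch k T) i t = k i * min t T"
proof -
  have "{0..T} \<inter> {0..t} = {0..min t T}" by auto
  then show ?thesis
    unfolding done_by_def uniform_schedule_def schedule.simps integral_restrict_Int
    using assms by simp
qed

lemma feasible_uniform_schedule:
  fixes k :: "nat \<Rightarrow> real" and ch :: "nat \<Rightarrow> bool"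
  assumes zero: "\<forall>tau\<in>set I. arrival tau = 0" and "0 \<le> T"
    and k_pos: "\<And>i. i < length I \<Longrightarrow> 0 < k i"
    and k_sum: "(\<Sum>i<length I. k i) \<le> real p"
    and k_serial: "\<And>i. i < length I \<Longrightarrow> \<not> ch i \<Longrightarrow> k i \<le> 1"
    and k_work: "\<And>i. i < length I \<Longrightarrow>
                   k i * T = (if ch i then par_work (I ! i) else ser_work (I ! i))"
  shows "feasible p I (uniform_schedule ch k T)"
  unfolding feasible_def
proof (intro conjI allI impI)
  let ?S = "uniform_schedule ch k T"
  fix i t
  have "{0..T} \<inter> {0..t} = {0..min t T}" by auto
  then show "alloc ?S i integrable_on {0..t}"
    unfolding uniform_schedule_def schedule.simps integrable_restrict_Int
    by (simp add: integrable_const_ivl)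
  assume i: "i < length I"
  show "0 \<le> alloc ?S i t" using k_pos[OF i] by (simp add: uniform_schedule_def)
  show "t < arrival (I ! i) \<Longrightarrow> alloc ?S i t = 0" using zero i by (simp add: uniform_schedule_def)
  show "\<not> choice ?S i \<Longrightarrow> alloc ?S i t \<le> 1" using k_serial[OF i] by (simp add: uniform_schedule_def)
next
  fix t
  have "(\<Sum>i<length I. alloc (uniform_schedule ch k T) i t) \<le> (\<Sum>i<length I. k i)"
    by (rule sum_mono) (use k_pos in \<open>auto simp: uniform_schedule_def less_imp_le\<close>)
  with k_sum show "(\<Sum>i<length I. alloc (uniform_schedule ch k T) i t) \<le> real p" by linarith
next
  let ?S = "uniform_schedule ch k T"
  fix i assume "i < length I"
  then have "work_of I ?S i = k i * T"
    using k_work by (simp add: work_of_def uniform_schedule_def)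
  also have "\<dots> = done_by ?S i T" using \<open>0 \<le> T\<close> by (simp add: done_by_uniform_schedule)
  finally show "\<exists>t. work_of I ?S i \<le> done_by ?S i t" by auto
qed

lemma opt_awake_le_uniform_rates:
  fixes k :: "nat \<Rightarrow> real" and ch :: "nat \<Rightarrow> bool"
  assumes "I \<noteq> []" and zero: "\<forall>tau\<in>set I. arrival tau = 0" and "0 < T"
    and k_pos: "\<And>i. i < length I \<Longrightarrow> 0 < k i"
    and k_sum: "(\<Sum>i<length I. k i) \<le> real p"
    and k_serial: "\<And>i. i < length I \<Longrightarrow> \<not> ch i \<Longrightarrow> k i \<le> 1"
    and k_work: "\<And>i. i < length I \<Longrightarrow>
                   k i * T = (if ch i then par_work (I ! i) else ser_work (I ! i))"
  shows "opt_awake p I \<le> T"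
proof -
  let ?S = "uniform_schedule ch k T"
  have F: "feasible p I ?S"
    using assms by (intro feasible_uniform_schedule) (simp_all add: less_imp_le)
  have work: "work_of I ?S i = k i * T" if "i < length I" for i
    using k_work[OF that] by (simp add: work_of_def uniform_schedule_def)
  have "completion I ?S i = T" if i: "i < length I" for i
  proof (rule antisym)
    show "completion I ?S i \<le> T"
      using zero i work \<open>0 < T\<close> by (intro completion_le) (simp_all add: done_by_uniform_schedule)
    have "0 \<le> completion I ?S i" using completion_attained(1)[OF F i] zero i by simp
    then have "k i * T \<le> k i * min (completion I ?S i) T"
      using completion_attained(2)[OF F i] work[OF i] \<open>0 < T\<close> by (simp add: done_by_uniform_schedule)
    then show "T \<le> completion I ?S i" using k_pos[OF i] by simp
  qed
  then have "awake_time I ?S = T"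
    using awake_time_zero_arrivals[OF F \<open>I \<noteq> []\<close> zero] \<open>I \<noteq> []\<close>
    by (simp add: image_constant_conv lessThan_empty_iff)
  then show ?thesis using opt_awake_le_awake_time[OF F] by simp
qed

definition differ_only_in_par_work :: "task list \<Rightarrow> task list \<Rightarrow> bool" where
  "differ_only_in_par_work I I' \<longleftrightarrow> length I = length I' \<and>
     (\<forall>i<length I. ser_work (I ! i) = ser_work (I' ! i) \<and> arrival (I ! i) = arrival (I' ! i))"

definition parallel_pending :: "task list \<Rightarrow> schedule \<Rightarrow> real \<Rightarrow> bool" where
  "parallel_pending I S t \<longleftrightarrow> (\<forall>i<length I. choice S i \<longrightarrow> t < completion I S i)"

lemma parallel_pending_open:
  assumes "parallel_pending I S s"
  obtains b where "s < b" "\<And>t. t < b \<Longrightarrow> parallel_pending I S t"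
proof -
  define B where "B = insert (s + 1) (completion I S ` {i. i < length I \<and> choice S i})"
  have fin: "finite B" by (simp add: B_def)
  then have "s < Min B" using assms by (simp add: B_def Min_gr_iff parallel_pending_def)
  moreover have "parallel_pending I S t" if "t < Min B" for t
    unfolding parallel_pending_def
  proof (intro allI impI)
    fix i assume "i < length I" "choice S i"
    then have "Min B \<le> completion I S i" using fin by (intro Min_le) (auto simp: B_def)
    with that show "t < completion I S i" by linarith
  qed
  ultimately show ?thesis by (rule that)
qed

lemma first_parallel_completion:
  assumes "j < length I" "choice S j"
  obtains j0 where "j0 < length I" "choice S j0" "completion I S j0 \<le> completion I S j"
    "\<And>t. t < completion I S j0 \<Longrightarrow> parallel_pending I S t"
proof -
  define J where "J = {i. i < length I \<and> choice S i}"
  define j0 where "j0 = arg_min_on (completion I S) J"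
  have J: "finite J" "J \<noteq> {}" using assms by (auto simp: J_def)
  have least: "completion I S j0 \<le> completion I S i" if "i < length I" "choice S i" for i
    unfolding j0_def by (rule arg_min_least[OF J]) (simp add: J_def that)
  have "j0 \<in> J" unfolding j0_def by (rule arg_min_if_finite(1)[OF J])
  show ?thesis
  proof (rule that)
    show "j0 < length I" "choice S j0" using \<open>j0 \<in> J\<close> by (simp_all add: J_def)
    show "completion I S j0 \<le> completion I S j" by (rule least[OF assms])
    show "parallel_pending I S t" if "t < completion I S j0" for t
      unfolding parallel_pending_def using least that by (meson less_le_trans)
  qed
qed

lemma same_history_if_parallel_pending:
  assumes "differ_only_in_par_work I I'"
    and "parallel_pending I (A I) t" "parallel_pending I' (A I') t"
  shows "same_history A I I' t"
  using assms
  by (auto simp: same_history_def differ_only_in_par_work_def parallel_pending_def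
      arrived_def par_done_def not_le)

lemma oblivious_scheduler_agrees:
  assumes A: "oblivious_scheduler p A" and V: "valid_instance p I" "valid_instance p I'"
    and D: "differ_only_in_par_work I I'"
    and pend: "parallel_pending I (A I) t" "parallel_pending I' (A I') t"
    and i: "i < length I" "arrival (I ! i) \<le> t"
  shows "u \<le> t \<Longrightarrow> alloc (A I) i u = alloc (A I') i u"
    and "0 < done_by (A I) i t \<Longrightarrow> choice (A I) i = choice (A I') i"
  using A V same_history_if_parallel_pending[OF D pend] i
  unfolding oblivious_scheduler_def arrived_def by blast+

lemma done_by_agrees_until_first_parallel_completion:
  assumes A: "oblivious_scheduler p A" and V: "valid_instance p I" "valid_instance p I'"
    and D: "differ_only_in_par_work I I'" and j: "j < length I" "arrival (I ! j) = 0"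
    and before: "\<And>t. t < completion I' (A I') j \<Longrightarrow> parallel_pending I (A I) t"
    and before': "\<And>t. t < completion I' (A I') j \<Longrightarrow> parallel_pending I' (A I') t"
    and "t \<le> completion I' (A I') j"
  shows "done_by (A I) j t = done_by (A I') j t"
proof -
  let ?c = "completion I' (A I') j"
  have agree: "alloc (A I) j u = alloc (A I') j u" if "0 \<le> u" "u < ?c" for u
  proof -
    have "arrival (I ! j) \<le> u" using j(2) that(1) by simp
    note agree_u =
      oblivious_scheduler_agrees[OF A V D before[OF that(2)] before'[OF that(2)] j(1) this]
    show ?thesis by (rule agree_u(1)[OF order_refl])
  qed
  show ?thesis
    unfolding done_by_def
    by (rule integral_spike[of "{?c}"])
      (use \<open>t \<le> ?c\<close> in \<open>auto simp: negligible_sing intro!: agree[symmetric]\<close>)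
qed

lemma first_parallel_completion_transfers:
  assumes A: "oblivious_scheduler p A" and V: "valid_instance p I" "valid_instance p I'"
    and D: "differ_only_in_par_work I I'"
    and j: "j < length I" "arrival (I ! j) = 0" and par: "choice (A I') j"
    and before: "\<And>t. t < completion I' (A I') j \<Longrightarrow> parallel_pending I (A I) t"
    and before': "\<And>t. t < completion I' (A I') j \<Longrightarrow> parallel_pending I' (A I') t"
  shows "choice (A I) j" and "par_work (I' ! j) \<le> done_by (A I) j (completion I' (A I') j)"
proof -
  let ?c = "completion I' (A I') j" and ?w = "par_work (I' ! j)"
  have same: "done_by (A I) j t = done_by (A I') j t" if "t \<le> ?c" for t
    using before before' that by (rule done_by_agrees_until_first_parallel_completion[OF A V D j])
  have j': "j < length I'" "arrival (I' ! j) = 0"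
    using D j by (auto simp: differ_only_in_par_work_def)
  have F': "feasible p I' (A I')" using A V by (simp add: oblivious_scheduler_def)
  have done': "?w \<le> done_by (A I') j ?c"
    using completion_attained(2)[OF F' j'(1)] par by (simp add: work_of_def)
  with same[of ?c] show "?w \<le> done_by (A I) j ?c" by simp
  have "0 < ?w" using work_of_pos[OF V(2) j'(1), of "A I'"] par by (simp add: work_of_def)
  \<comment> \<open>the history fixes the choice only once the job has received some work, so we need
    a time before c at which it has\<close>
  have "done_by (A I') j 0 \<le> ?w / 2" "?w / 2 \<le> done_by (A I') j ?c" "0 \<le> ?c"
    using done' \<open>0 < ?w\<close> completion_attained(1)[OF F' j'(1)] j'(2)
    by (simp_all add: done_by_nonpos)
  then obtain t where t: "0 \<le> t" "t \<le> ?c" "done_by (A I') j t = ?w / 2"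
    using IVT'[OF _ _ _ continuous_on_done_by[OF F' j'(1)]] by blast
  then have "t < ?c" using done' \<open>0 < ?w\<close> by (cases "t = ?c") auto
  have "0 < done_by (A I) j t" using same[OF t(2)] t(3) \<open>0 < ?w\<close> by simp
  moreover have "arrival (I ! j) \<le> t" using j(2) t(1) by simp
  ultimately have "choice (A I) j = choice (A I') j"
    by (rule oblivious_scheduler_agrees(2)[OF A V D before[OF \<open>t < ?c\<close>] before'[OF \<open>t < ?c\<close>]
          j(1), rotated])
  with par show "choice (A I) j" by simp
qed

lemma parallel_pending_transfers:
  assumes A: "oblivious_scheduler p A" and V: "valid_instance p I" "valid_instance p I'"
    and D: "differ_only_in_par_work I I'" and zero: "\<forall>tau\<in>set I. arrival tau = 0"
    and pend: "\<And>t. t \<le> s \<Longrightarrow> parallel_pending I (A I) t"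
    and short: "\<And>j. j < length I \<Longrightarrow> choice (A I) j \<Longrightarrow> done_by (A I) j s < par_work (I' ! j)"
  shows "parallel_pending I' (A I') s"
proof (rule ccontr)
  assume "\<not> parallel_pending I' (A I') s"
  then obtain j where j: "j < length I'" "choice (A I') j" "completion I' (A I') j \<le> s"
    by (auto simp: parallel_pending_def not_less)
  obtain j0 where j0: "j0 < length I'" "choice (A I') j0"
      "completion I' (A I') j0 \<le> completion I' (A I') j"
      and first: "\<And>t. t < completion I' (A I') j0 \<Longrightarrow> parallel_pending I' (A I') t"
    using first_parallel_completion[OF j(1,2)] by blast
  let ?c = "completion I' (A I') j0"
  have j0I: "j0 < length I" "arrival (I ! j0) = 0"
    using D j0(1) zero by (auto simp: differ_only_in_par_work_def)
  have before: "parallel_pending I (A I) t" if "t < ?c" for t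
    using pend that j(3) j0(3) by (meson less_le_trans less_imp_le)
  note transfer = first_parallel_completion_transfers[OF A V D j0I j0(2) before first]
  have F: "feasible p I (A I)" using A V by (simp add: oblivious_scheduler_def)
  have "done_by (A I) j0 ?c \<le> done_by (A I) j0 s"
    using done_by_mono[OF F j0I(1)] j(3) j0(3) by simp
  with transfer(2) short[OF j0I(1) transfer(1)] show False by linarith
qed

lemma serial_start_not_earlier:
  assumes A: "oblivious_scheduler p A" and V: "valid_instance p I" "valid_instance p I'"
    and D: "differ_only_in_par_work I I'" and zero: "\<forall>tau\<in>set I. arrival tau = 0"
    and b: "b < length I" "\<not> choice (A I) b"
    and start: "0 \<le> s" "done_by (A I) b s = 0" "\<And>t. s < t \<Longrightarrow> 0 < done_by (A I) b t"
    and pend: "s < r" "\<And>t. t < r \<Longrightarrow> parallel_pending I (A I) t"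
    and short: "\<And>j. j < length I \<Longrightarrow> choice (A I) j \<Longrightarrow> done_by (A I) j s < par_work (I' ! j)"
  shows "s + ser_work (I ! b) \<le> completion I' (A I') b"
proof -
  have "parallel_pending I' (A I') s"
    by (rule parallel_pending_transfers[OF A V D zero _ short]) (use pend in auto)
  then obtain r' where "s < r'" and pend': "\<And>t. t < r' \<Longrightarrow> parallel_pending I' (A I') t"
    using parallel_pending_open by blast
  \<comment> \<open>b has started in I by time t, which fixes the (serial) choice for b in I'\<close>
  define t where "t = (s + min r r') / 2"
  have t: "s < t" "t < r" "t < r'" using \<open>s < r'\<close> pend(1) by (auto simp: t_def)
  have arr: "arrival (I ! b) \<le> t" using zero b(1) t(1) start(1) by simp
  note agree = oblivious_scheduler_agrees[OF A V D pend(2)[OF t(2)] pend'[OF t(3)] b(1) arr]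
  have "\<not> choice (A I') b" using agree(2)[OF start(3)[OF t(1)]] b(2) by simp
  moreover have "done_by (A I') b s = 0"
    using done_by_congI[of s "A I" b "A I'"] agree(1) t(1) start(2) by simp
  moreover have "feasible p I' (A I')" "b < length I'" "0 < ser_work (I' ! b)"
    using A V D b(1) valid_instance_works(1)[OF V(2) nth_mem]
    by (auto simp: oblivious_scheduler_def differ_only_in_par_work_def)
  ultimately have "s + ser_work (I' ! b) \<le> completion I' (A I') b"
    using serial_completion_ge by blast
  then show ?thesis using D b(1) by (simp add: differ_only_in_par_work_def)
qed

definition two_tasks :: "real \<Rightarrow> real \<Rightarrow> task list" where
  "two_tasks x y = [(1, x, 0), (1, y, 0)]"

lemma two_tasks_simps [simp]:
  "length (two_tasks x y) = 2"
  "two_tasks x y \<noteq> []"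
  "i < 2 \<Longrightarrow> ser_work (two_tasks x y ! i) = 1"
  "i < 2 \<Longrightarrow> arrival (two_tasks x y ! i) = 0"
  "par_work (two_tasks x y ! 0) = x"
  "par_work (two_tasks x y ! Suc 0) = y"
  by (auto simp: two_tasks_def ser_work_def arrival_def par_work_def less_2_cases_iff)

lemma two_tasks_zero_arrivals: "\<forall>tau\<in>set (two_tasks x y). arrival tau = 0"
  by (simp add: two_tasks_def arrival_def)

lemma valid_two_tasks:
  "1 \<le> x \<Longrightarrow> x \<le> real p \<Longrightarrow> 1 \<le> y \<Longrightarrow> y \<le> real p \<Longrightarrow> valid_instance p (two_tasks x y)"
  by (simp add: two_tasks_def valid_instance_def ser_work_def par_work_def arrival_def)

lemma two_tasks_differ_only_in_par_work:
  "differ_only_in_par_work (two_tasks x y) (two_tasks x' y')"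
  by (simp add: differ_only_in_par_work_def)

lemma parallel_pending_two_tasks_before_one:
  assumes F: "feasible p (two_tasks (real p) (real p)) S" and "0 < p" and "t < 1"
  shows "parallel_pending (two_tasks (real p) (real p)) S t"
  unfolding parallel_pending_def
proof (intro allI impI)
  fix i assume i: "i < length (two_tasks (real p) (real p))" and "choice S i"
  then have "real p * 1 \<le> real p * completion (two_tasks (real p) (real p)) S i"
    using work_le_processors_times_completion[OF F i]
    by (auto simp: work_of_def less_2_cases_iff)
  with \<open>0 < p\<close> \<open>t < 1\<close> show "t < completion (two_tasks (real p) (real p)) S i" by simp
qed

lemma opt_awake_two_tasks_serial:
  assumes "2 \<le> real p"
  shows "opt_awake p (two_tasks x y) \<le> 1"
  by (rule opt_awake_le_uniform_rates[where k = "\<lambda>_. 1" and ch = "\<lambda>_. False"])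
    (use assms in \<open>simp_all add: two_tasks_zero_arrivals two_tasks_def[symmetric]\<close>)

lemma opt_awake_two_tasks_parallel:
  assumes "0 < x" "0 < y" "0 < real p"
  shows "opt_awake p (two_tasks x y) \<le> (x + y) / real p"
proof (rule opt_awake_le_uniform_rates[where ch = "\<lambda>_. True"])
  let ?k = "\<lambda>i. real p * par_work (two_tasks x y ! i) / (x + y)"
  show "(\<Sum>i<length (two_tasks x y). ?k i) \<le> real p"
    using assms by (simp add: numeral_2_eq_2 add_divide_distrib[symmetric] distrib_left[symmetric])
  show "0 < ?k i" if "i < length (two_tasks x y)" for i
    using that assms by (auto simp: less_2_cases_iff)
  show "?k i * ((x + y) / real p) =
      (if True then par_work (two_tasks x y ! i) else ser_work (two_tasks x y ! i))" for i
    using assms by simp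
qed (use assms in \<open>simp_all add: two_tasks_zero_arrivals two_tasks_def[symmetric]\<close>)

lemma both_parallel_lower_bound:
  assumes A: "oblivious_scheduler p A" and p: "2 \<le> real p"
    and par: "choice (A (two_tasks (real p) (real p))) 0"
      "choice (A (two_tasks (real p) (real p))) 1"
  shows "2 * opt_awake p (two_tasks (real p) (real p))
           \<le> awake_time (two_tasks (real p) (real p)) (A (two_tasks (real p) (real p)))"
proof -
  let ?B = "two_tasks (real p) (real p)"
  let ?T = "awake_time ?B (A ?B)"
  have F: "feasible p ?B (A ?B)" using A valid_two_tasks[of "real p" p "real p"] p
    by (simp add: oblivious_scheduler_def)
  have each: "real p \<le> done_by (A ?B) i ?T" if "i < 2" and "choice (A ?B) i" for i
  proof -
    have i: "i < length ?B" using that by simp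
    have "real p = work_of ?B (A ?B) i" using that by (auto simp: work_of_def less_2_cases_iff)
    also have "\<dots> \<le> done_by (A ?B) i (completion ?B (A ?B) i)"
      by (rule completion_attained(2)[OF F i])
    also have "\<dots> \<le> done_by (A ?B) i ?T"
      by (rule done_by_mono[OF F i completion_le_awake_time[OF F two_tasks_zero_arrivals i]])
    finally show ?thesis .
  qed
  have "2 * real p \<le> (\<Sum>i<length ?B. done_by (A ?B) i ?T)"
    using each[OF _ par(1)] each[OF _ par(2)] by (simp add: numeral_2_eq_2)
  also have "\<dots> \<le> real p * ?T" by (rule sum_done_by_le[OF F]) (simp add: awake_time_def)
  finally have "2 \<le> ?T" using p by (simp add: mult.commute)
  moreover have "opt_awake p ?B \<le> 1" by (rule opt_awake_two_tasks_serial[OF p])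
  ultimately show ?thesis by simp
qed

lemma late_serial_start_lower_bound:
  assumes A: "oblivious_scheduler p A" and p: "4 \<le> real p"
    and V: "valid_instance p (two_tasks x y)"
    and b: "b < 2" "\<not> choice (A (two_tasks x y)) b"
    and idle: "done_by (A (two_tasks x y)) b s = 0" and late: "1 - 4 / real p \<le> s"
  shows "(2 - 8 / real p) * opt_awake p (two_tasks x y)
           \<le> awake_time (two_tasks x y) (A (two_tasks x y))"
proof -
  let ?I = "two_tasks x y"
  have F: "feasible p ?I (A ?I)" using A V by (simp add: oblivious_scheduler_def)
  have "s + 1 \<le> completion ?I (A ?I) b"
    using serial_completion_ge[OF F _ b(2) _ idle] b(1) by simp
  also have "\<dots> \<le> awake_time ?I (A ?I)"
    by (rule completion_le_awake_time[OF F two_tasks_zero_arrivals]) (simp add: b(1))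
  finally have "2 - 4 / real p \<le> awake_time ?I (A ?I)" using late by simp
  moreover have "(2 - 8 / real p) * opt_awake p ?I \<le> 2 - 8 / real p"
    using p opt_awake_two_tasks_serial[of p x y] opt_awake_nonneg[OF F]
    by (intro mult_left_le) (simp_all add: field_simps)
  moreover have "4 / real p \<le> 8 / real p" by (simp add: divide_right_mono)
  ultimately show ?thesis by linarith
qed

lemma two_tasks_awake_time_ge_serial_start:
  assumes A: "oblivious_scheduler p A" and p: "1 \<le> real p"
    and ab: "a < 2" "b < 2" "a \<noteq> b"
    and serial: "\<not> choice (A (two_tasks (real p) (real p))) b"
    and start: "0 \<le> s" "done_by (A (two_tasks (real p) (real p))) b s = 0"
      "\<And>t. s < t \<Longrightarrow> 0 < done_by (A (two_tasks (real p) (real p))) b t"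
    and "s < 1"
    and VW: "valid_instance p (two_tasks x y)"
    and short: "done_by (A (two_tasks (real p) (real p))) a s < par_work (two_tasks x y ! a)"
  shows "s + 1 \<le> awake_time (two_tasks x y) (A (two_tasks x y))"
proof -
  let ?B = "two_tasks (real p) (real p)" and ?W = "two_tasks x y"
  have VB: "valid_instance p ?B" using p by (simp add: valid_two_tasks)
  have FB: "feasible p ?B (A ?B)" "feasible p ?W (A ?W)"
    using A VB VW by (simp_all add: oblivious_scheduler_def)
  have pendB: "parallel_pending ?B (A ?B) t" if "t < 1" for t
    using parallel_pending_two_tasks_before_one[OF FB(1) _ that] p by simp
  have "done_by (A ?B) j s < par_work (?W ! j)" if "j < length ?B" "choice (A ?B) j" for j
    using that ab serial short by (auto simp: less_2_cases_iff)
  moreover have "b < length ?B" using ab(2) by simp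
  ultimately have "s + 1 \<le> completion ?W (A ?W) b"
    using serial_start_not_earlier[OF A VB VW two_tasks_differ_only_in_par_work
        two_tasks_zero_arrivals _ serial start \<open>s < 1\<close> pendB] ab(2) by simp
  also have "\<dots> \<le> awake_time ?W (A ?W)"
    by (rule completion_le_awake_time[OF FB(2) two_tasks_zero_arrivals]) (simp add: ab(2))
  finally show ?thesis .
qed

lemma early_serial_start_lower_bound:
  assumes A: "oblivious_scheduler p A" and p: "4 \<le> real p"
    and ab: "a < 2" "b < 2" "a \<noteq> b"
    and serial: "\<not> choice (A (two_tasks (real p) (real p))) b"
    and start: "0 \<le> s" "done_by (A (two_tasks (real p) (real p))) b s = 0"
      "\<And>t. s < t \<Longrightarrow> 0 < done_by (A (two_tasks (real p) (real p))) b t"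
    and early: "s < 1 - 4 / real p"
  obtains x y where "1 \<le> x" "x \<le> real p" "1 \<le> y" "y \<le> real p"
    "(2 - 8 / real p) * opt_awake p (two_tasks x y)
       \<le> awake_time (two_tasks x y) (A (two_tasks x y))"
proof -
  let ?B = "two_tasks (real p) (real p)"
  define z where "z = max 1 (done_by (A ?B) a s + 1)"
  define x y where "x = (if a = 0 then z else 1)" and "y = (if a = 0 then 1 else z)"
  let ?W = "two_tasks x y"
  have FB: "feasible p ?B (A ?B)"
    using A p by (simp add: oblivious_scheduler_def valid_two_tasks)
  have "done_by (A ?B) a s \<le> real p * s"
    by (rule done_by_le_processors_times[OF FB _ start(1)]) (simp add: ab(1))
  moreover have "real p * s + 1 \<le> real p" using early p by (simp add: field_simps)
  ultimately have z: "1 \<le> z" "z \<le> real p * s + 1" "z \<le> real p" "done_by (A ?B) a s < z"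
    using start(1) p by (auto simp: z_def)
  have xy: "1 \<le> x" "x \<le> real p" "1 \<le> y" "y \<le> real p" "x + y = z + 1" "par_work (?W ! a) = z"
    using z p ab(1) by (auto simp: x_def y_def less_2_cases_iff)
  have VW: "valid_instance p ?W" using xy by (simp add: valid_two_tasks)
  have "0 \<le> 4 / real p" by simp
  with early have "s < 1" by linarith
  with two_tasks_awake_time_ge_serial_start[OF A _ ab serial start _ VW] z(4) xy(6) p
  have awake: "s + 1 \<le> awake_time ?W (A ?W)" by simp
  have "opt_awake p ?W \<le> (z + 1) / real p"
    using opt_awake_two_tasks_parallel[of x y p] xy p by simp
  also have "\<dots> \<le> (real p * s + 2) / real p" using z(2) by (intro divide_right_mono) simp_all
  also have "\<dots> = s + 2 / real p" using p by (simp add: field_simps)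
  finally have opt: "opt_awake p ?W \<le> s + 2 / real p" .
  have "0 \<le> 2 - 8 / real p" using p by (simp add: field_simps)
  then have "(2 - 8 / real p) * opt_awake p ?W \<le> (2 - 8 / real p) * (s + 2 / real p)"
    by (rule mult_left_mono[OF opt])
  also have "\<dots> \<le> 2 * (s + 2 / real p)" using start(1) by (intro mult_right_mono) simp_all
  also have "\<dots> \<le> s + 1" using early by simp
  finally have "(2 - 8 / real p) * opt_awake p ?W \<le> awake_time ?W (A ?W)" using awake by linarith
  with xy(1-4) show ?thesis by (rule that)
qed

lemma serial_task_lower_bound:
  assumes A: "oblivious_scheduler p A" and p: "4 \<le> real p"
    and ab: "a < 2" "b < 2" "a \<noteq> b"
    and serial: "\<not> choice (A (two_tasks (real p) (real p))) b"
  shows "\<exists>x y. 1 \<le> x \<and> x \<le> real p \<and> 1 \<le> y \<and> y \<le> real p \<and>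
     (2 - 8 / real p) * opt_awake p (two_tasks x y)
       \<le> awake_time (two_tasks x y) (A (two_tasks x y))"
proof -
  let ?B = "two_tasks (real p) (real p)"
  have VB: "valid_instance p ?B" using p by (simp add: valid_two_tasks)
  then have FB: "feasible p ?B (A ?B)" using A by (simp add: oblivious_scheduler_def)
  have "1 \<le> done_by (A ?B) b (completion ?B (A ?B) b)"
    using completion_attained(2)[OF FB, of b] ab(2) serial by (simp add: work_of_def)
  then have "0 < done_by (A ?B) b (completion ?B (A ?B) b)" by linarith
  with processing_start[OF FB, of b] ab(2) obtain s where start: "0 \<le> s"
    "done_by (A ?B) b s = 0" "\<And>t. s < t \<Longrightarrow> 0 < done_by (A ?B) b t"
    by auto
  show ?thesis
  proof (cases "s < 1 - 4 / real p")
    case True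
    with early_serial_start_lower_bound[OF A p ab serial start] show ?thesis by metis
  next
    case False
    with late_serial_start_lower_bound[OF A p VB _ serial start(2)] ab(2)
    have "(2 - 8 / real p) * opt_awake p ?B \<le> awake_time ?B (A ?B)" by simp
    then show ?thesis using p by (intro exI[of _ "real p"]) simp
  qed
qed

lemma two_tasks_lower_bound:
  assumes p: "1 \<le> p" and A: "oblivious_scheduler p A"
  shows "\<exists>x y. 1 \<le> x \<and> x \<le> real p \<and> 1 \<le> y \<and> y \<le> real p \<and>
     (2 - 8 / real p) * opt_awake p (two_tasks x y)
       \<le> awake_time (two_tasks x y) (A (two_tasks x y))"
proof (cases "4 \<le> real p")
  case False
  let ?S = "two_tasks 1 1"
  have "feasible p ?S (A ?S)" using A p by (simp add: oblivious_scheduler_def valid_two_tasks)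
  moreover have "2 - 8 / real p \<le> 0" using False p by (simp add: field_simps)
  moreover have "0 * opt_awake p ?S \<le> awake_time ?S (A ?S)" by (simp add: awake_time_def)
  ultimately have "(2 - 8 / real p) * opt_awake p ?S \<le> awake_time ?S (A ?S)"
    by (rule opt_awake_coeff_mono)
  then show ?thesis using p by (intro exI[of _ 1]) simp
next
  case True
  let ?B = "two_tasks (real p) (real p)"
  show ?thesis
  proof (cases "choice (A ?B) 0 \<and> choice (A ?B) 1")
    case both_parallel: True
    have "feasible p ?B (A ?B)" using A True by (simp add: oblivious_scheduler_def valid_two_tasks)
    moreover have "2 - 8 / real p \<le> 2" by simp
    moreover have "2 * opt_awake p ?B \<le> awake_time ?B (A ?B)"
      using both_parallel_lower_bound[OF A] both_parallel True by simp
    ultimately have "(2 - 8 / real p) * opt_awake p ?B \<le> awake_time ?B (A ?B)"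
      by (rule opt_awake_coeff_mono)
    then show ?thesis using True by (intro exI[of _ "real p"]) simp
  next
    case False
    then show ?thesis
      using serial_task_lower_bound[OF A True, of 1 0] serial_task_lower_bound[OF A True, of 0 1]
      by auto
  qed
qed

theorem proposition8p4:
  shows "\<exists>C::real. \<forall>p::nat. \<forall>A. 1 \<le> p \<longrightarrow> oblivious_scheduler p A \<longrightarrow>
     (\<exists>I. valid_instance p I \<and> I \<noteq> [] \<and> (\<forall>tau\<in>set I. arrival tau = 0) \<and>
          (2 - C / real p) * opt_awake p I \<le> awake_time I (A I))"
proof (intro exI[of _ 8] allI impI)
  fix p :: nat and A assume "1 \<le> p" "oblivious_scheduler p A"
  then obtain x y where "1 \<le> x" "x \<le> real p" "1 \<le> y" "y \<le> real p"
    "(2 - 8 / real p) * opt_awake p (two_tasks x y)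
       \<le> awake_time (two_tasks x y) (A (two_tasks x y))"
    using two_tasks_lower_bound by blast
  then show "\<exists>I. valid_instance p I \<and> I \<noteq> [] \<and> (\<forall>tau\<in>set I. arrival tau = 0) \<and>
      (2 - 8 / real p) * opt_awake p I \<le> awake_time I (A I)"
    using valid_two_tasks two_tasks_zero_arrivals by (intro exI[of _ "two_tasks x y"]) simp
qed

end
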